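(* Let $N\geq 2$ and let $\Sigma$ be the one-sided shift on $\{0,1,\dots,N-1\}^{\mathbb{N}_0}$, ordered lexicographically. Then for every $L\geq N+2$, $\Sigma$ has forbidden root patterns of length $L$.
   Context: $\{0,1,\dots,N-1\}^{\mathbb{N}_0}$ is the set of sequences $\omega=(\omega_0,\omega_1,\dots)$ with $\omega_n\in\{0,\dots,N-1\}$, and $\Sigma(\omega_0,\omega_1,\dots)=(\omega_1,\omega_2,\dots)$; $\omega<\omega'$ lexicographically iff at the first index $n$ where they differ, $\omega_n<\omega'_n$. $\mathcal{S}_L$ is the set of permutations $\pi=[\pi_0,\dots,\pi_{L-1}]$ of $\{0,\dots,L-1\}$. $\omega$ defines $\pi$ if $\Sigma^{\pi_0}(\omega)<\dots<\Sigma^{\pi_{L-1}}(\omega)$; $\pi$ is forbidden if no $\omega$ defines it. For $\pi\in\mathcal{S}_L$ and $M>L$, a pattern $\sigma=[\sigma_0,\dots,\sigma_{M-1}]\in\mathcal{S}_M$ is an outgrowth pattern of $\pi$ if there exist $n\in\{0,1,\dots,M-L\}$ and indices $i_0<i_1<\dots<i_{L-1}$ with $\sigma_{i_k}=\pi_k+n$ for $k=0,\dots,L-1$ (equivalently, $\sigma^{-1}$ contains $\pi^{-1}$ as a consecutive pattern). A forbidden root pattern is a forbidden pattern that is not an outgrowth pattern of any forbidden pattern of shorter length. *)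

theory Defs
  imports Main
begin

definition seqs :: "nat \<Rightarrow> (nat \<Rightarrow> nat) set" where
  "seqs N = {\<omega>. \<forall>n. \<omega> n < N}"

definition shift_pow :: "nat \<Rightarrow> (nat \<Rightarrow> nat) \<Rightarrow> (nat \<Rightarrow> nat)" where
  "shift_pow k \<omega> = (\<lambda>n. \<omega> (n + k))"

definition lex_less :: "(nat \<Rightarrow> nat) \<Rightarrow> (nat \<Rightarrow> nat) \<Rightarrow> bool" where
  "lex_less \<omega> \<omega>' \<longleftrightarrow> (\<exists>n. (\<forall>m<n. \<omega> m = \<omega>' m) \<and> \<omega> n < \<omega>' n)"

definition perms :: "nat \<Rightarrow> nat list set" where
  "perms L = {\<pi>. length \<pi> = L \<and> distinct \<pi> \<and> set \<pi> = {0..<L}}"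

definition defines_pat :: "(nat \<Rightarrow> nat) \<Rightarrow> nat list \<Rightarrow> bool" where
  "defines_pat \<omega> \<pi> \<longleftrightarrow>
     (\<forall>k. Suc k < length \<pi> \<longrightarrow> lex_less (shift_pow (\<pi> ! k) \<omega>) (shift_pow (\<pi> ! Suc k) \<omega>))"

definition forbidden :: "nat \<Rightarrow> nat list \<Rightarrow> bool" where
  "forbidden N \<pi> \<longleftrightarrow> \<pi> \<in> perms (length \<pi>) \<and> \<not> (\<exists>\<omega>\<in>seqs N. defines_pat \<omega> \<pi>)"

definition outgrowth :: "nat list \<Rightarrow> nat list \<Rightarrow> bool" where
  "outgrowth \<sigma> \<pi> \<longleftrightarrow>
     \<sigma> \<in> perms (length \<sigma>) \<and> \<pi> \<in> perms (length \<pi>) \<and> length \<sigma> > length \<pi> \<and>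
     (\<exists>n \<le> length \<sigma> - length \<pi>. \<exists>i :: nat \<Rightarrow> nat.
        (\<forall>k l. k < l \<and> l < length \<pi> \<longrightarrow> i k < i l) \<and>
        (\<forall>k < length \<pi>. i k < length \<sigma> \<and> \<sigma> ! (i k) = \<pi> ! k + n))"

definition forbidden_root :: "nat \<Rightarrow> nat list \<Rightarrow> bool" where
  "forbidden_root N \<pi> \<longleftrightarrow> forbidden N \<pi> \<and>
     \<not> (\<exists>\<pi>'. length \<pi>' < length \<pi> \<and> forbidden N \<pi>' \<and> outgrowth \<pi> \<pi>')"

end

theory Submission
  imports Defs
begin

text \<open>The root pattern \<open>\<pi>\<close> below starts with \<open>N + 1\<close> entries such that for any two consecutive ones
  \<open>a, b\<close> the successors \<open>b + 1, a + 1\<close> appear in \<open>\<pi>\<close> in this order. If \<open>\<omega>\<close> defines \<open>\<pi>\<close>, the shift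
  at \<open>a\<close> is below the shift at \<open>b\<close> while the shift at \<open>b + 1\<close> is below the shift at \<open>a + 1\<close>, which
  forces \<open>\<omega> a < \<omega> b\<close>; so \<open>\<omega>\<close> would need \<open>N + 1\<close> distinct symbols, and \<open>\<pi>\<close> is forbidden.
  A shorter pattern of which \<open>\<pi>\<close> is an outgrowth is the pattern of \<open>\<pi>\<close> on a window avoiding
  position \<open>0\<close> or position \<open>L - 1\<close>, and on both such windows the order prescribed by \<open>\<pi>\<close> is
  realized by an explicit sequence over \<open>N\<close> symbols; hence that shorter pattern is allowed.\<close>

lemma shift_pow_shift_pow: "shift_pow a (shift_pow n \<omega>) = shift_pow (a + n) \<omega>"
  unfolding shift_pow_def by (simp add: add.assoc)

lemma shift_pow_in_seqs: "\<omega> \<in> seqs N \<Longrightarrow> shift_pow n \<omega> \<in> seqs N"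
  unfolding seqs_def shift_pow_def by simp

lemma lex_less_trans: "lex_less a b \<Longrightarrow> lex_less b c \<Longrightarrow> lex_less a c"
proof -
  assume "lex_less a b" "lex_less b c"
  then obtain n m where n: "\<forall>i<n. a i = b i" "a n < b n" and m: "\<forall>i<m. b i = c i" "b m < c m"
    unfolding lex_less_def by blast
  have "\<forall>i<min n m. a i = c i" using n(1) m(1) by simp
  moreover have "a (min n m) < c (min n m)"
    using n m by (cases n m rule: linorder_cases) auto
  ultimately show ?thesis unfolding lex_less_def by blast
qed

lemma lex_less_asym: "lex_less a b \<Longrightarrow> \<not> lex_less b a"
proof
  assume "lex_less a b" "lex_less b a"
  then obtain n m where n: "\<forall>i<n. a i = b i" "a n < b n" and m: "\<forall>i<m. b i = a i" "b m < a m"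
    unfolding lex_less_def by blast
  show False using n m by (cases n m rule: linorder_cases) auto
qed

lemma lex_less_shift_powI:
  assumes "\<forall>m<n. \<omega> (p + m) = \<omega> (q + m)" and "\<omega> (p + n) < \<omega> (q + n)"
  shows "lex_less (shift_pow p \<omega>) (shift_pow q \<omega>)"
  unfolding lex_less_def shift_pow_def using assms by (intro exI[of _ n]) (auto simp: add.commute)

lemma lex_less_shift_pow_if_less: "\<omega> p < \<omega> q \<Longrightarrow> lex_less (shift_pow p \<omega>) (shift_pow q \<omega>)"
  using lex_less_shift_powI[of 0 \<omega> p q] by simp

lemma less_if_lex_less_shift_pow_Suc_swapped:
  assumes "lex_less (shift_pow p \<omega>) (shift_pow q \<omega>)"
    and "lex_less (shift_pow (Suc q) \<omega>) (shift_pow (Suc p) \<omega>)"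
  shows "\<omega> p < \<omega> q"
proof -
  obtain n where n: "\<forall>i<n. \<omega> (i + p) = \<omega> (i + q)" "\<omega> (n + p) < \<omega> (n + q)"
    using assms(1) unfolding lex_less_def shift_pow_def by blast
  show ?thesis
  proof (cases n)
    case (Suc n')
    have "lex_less (shift_pow (Suc p) \<omega>) (shift_pow (Suc q) \<omega>)"
      unfolding lex_less_def shift_pow_def using n Suc by (intro exI[of _ n']) auto
    with assms(2) show ?thesis using lex_less_asym by blast
  qed (use n in simp)
qed

lemma lex_less_shift_pow_plateau:
  assumes plateau: "\<And>x. a \<le> x \<Longrightarrow> x < c \<Longrightarrow> \<omega> x = v" and drop: "\<omega> c < v"
    and "a \<le> q" "q < p" "p \<le> c"
  shows "lex_less (shift_pow p \<omega>) (shift_pow q \<omega>)"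
proof (rule lex_less_shift_powI[of "c - p"])
  show "\<forall>m<c - p. \<omega> (p + m) = \<omega> (q + m)" using assms by (simp add: plateau)
  show "\<omega> (p + (c - p)) < \<omega> (q + (c - p))" using assms by simp
qed

definition realizes_on :: "(nat \<Rightarrow> nat) \<Rightarrow> nat list \<Rightarrow> nat set \<Rightarrow> bool" where
  "realizes_on \<omega> \<sigma> W \<longleftrightarrow> (\<forall>j j'. j < j' \<longrightarrow> j' < length \<sigma> \<longrightarrow> \<sigma> ! j \<in> W \<longrightarrow> \<sigma> ! j' \<in> W \<longrightarrow>
     lex_less (shift_pow (\<sigma> ! j) \<omega>) (shift_pow (\<sigma> ! j') \<omega>))"

lemma realizes_on_subset: "realizes_on \<omega> \<sigma> W \<Longrightarrow> V \<subseteq> W \<Longrightarrow> realizes_on \<omega> \<sigma> V"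
  unfolding realizes_on_def by blast

lemma defines_pat_imp_realizes_on:
  assumes "defines_pat \<omega> \<sigma>"
  shows "realizes_on \<omega> \<sigma> W"
proof -
  have "lex_less (shift_pow (\<sigma> ! j) \<omega>) (shift_pow (\<sigma> ! j') \<omega>)" if "j < j'" "j' < length \<sigma>" for j j'
    using that
  proof (induction j')
    case (Suc k)
    have step: "lex_less (shift_pow (\<sigma> ! k) \<omega>) (shift_pow (\<sigma> ! Suc k) \<omega>)"
      using assms Suc.prems(2) unfolding defines_pat_def by blast
    show ?case
    proof (cases "j = k")
      case False
      with Suc have "lex_less (shift_pow (\<sigma> ! j) \<omega>) (shift_pow (\<sigma> ! k) \<omega>)" by simp
      then show ?thesis using step by (rule lex_less_trans)
    qed (use step in simp)
  qed simp
  then show ?thesis unfolding realizes_on_def by blast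
qed

lemma outgrowth_window:
  assumes "outgrowth \<sigma> \<pi>"
  obtains n where "n + length \<pi> \<le> length \<sigma>"
    and "\<And>\<omega>. realizes_on \<omega> \<sigma> {n..<n + length \<pi>} \<Longrightarrow> defines_pat (shift_pow n \<omega>) \<pi>"
proof -
  obtain n i where n: "n \<le> length \<sigma> - length \<pi>"
    and mono: "\<And>k l. k < l \<Longrightarrow> l < length \<pi> \<Longrightarrow> i k < i l"
    and i: "\<And>k. k < length \<pi> \<Longrightarrow> i k < length \<sigma> \<and> \<sigma> ! i k = \<pi> ! k + n"
    and perm: "\<pi> \<in> perms (length \<pi>)" and shorter: "length \<pi> < length \<sigma>"
    using assms unfolding outgrowth_def by blast
  have entry: "\<pi> ! k < length \<pi>" if "k < length \<pi>" for k
    using perm that nth_mem[OF that] unfolding perms_def by auto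
  have "defines_pat (shift_pow n \<omega>) \<pi>" if \<omega>: "realizes_on \<omega> \<sigma> {n..<n + length \<pi>}" for \<omega>
    unfolding defines_pat_def shift_pow_shift_pow
  proof (intro allI impI)
    fix k assume k: "Suc k < length \<pi>"
    show "lex_less (shift_pow (\<pi> ! k + n) \<omega>) (shift_pow (\<pi> ! Suc k + n) \<omega>)"
      using \<omega>[unfolded realizes_on_def, rule_format, of "i k" "i (Suc k)"]
        mono[of k "Suc k"] i[of k] i[of "Suc k"] entry[of k] entry[of "Suc k"] k by simp
  qed
  moreover have "n + length \<pi> \<le> length \<sigma>" using n shorter by linarith
  ultimately show ?thesis using that by blast
qed

text \<open>Every shorter pattern of which \<open>\<sigma>\<close> is an outgrowth sits inside one of these two windows.\<close>
lemma forbidden_root_if_maximal_windows_realized: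
  assumes "forbidden N \<sigma>"
    and "\<omega>\<^sub>0 \<in> seqs N" "realizes_on \<omega>\<^sub>0 \<sigma> {0..<length \<sigma> - 1}"
    and "\<omega>\<^sub>1 \<in> seqs N" "realizes_on \<omega>\<^sub>1 \<sigma> {1..<length \<sigma>}"
  shows "forbidden_root N \<sigma>"
  unfolding forbidden_root_def
proof (intro conjI notI)
  assume "\<exists>\<pi>. length \<pi> < length \<sigma> \<and> forbidden N \<pi> \<and> outgrowth \<sigma> \<pi>"
  then obtain \<pi> where shorter: "length \<pi> < length \<sigma>" and "forbidden N \<pi>" and "outgrowth \<sigma> \<pi>"
    by blast
  then have no_witness: "\<not> defines_pat \<omega> \<pi>" if "\<omega> \<in> seqs N" for \<omega>
    using that unfolding forbidden_def by blast
  obtain n where fits: "n + length \<pi> \<le> length \<sigma>"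
    and window: "\<And>\<omega>. realizes_on \<omega> \<sigma> {n..<n + length \<pi>} \<Longrightarrow> defines_pat (shift_pow n \<omega>) \<pi>"
    using outgrowth_window[OF \<open>outgrowth \<sigma> \<pi>\<close>] by blast
  show False
  proof (cases "n = 0")
    case True
    then have "{n..<n + length \<pi>} \<subseteq> {0..<length \<sigma> - 1}" using shorter by auto
    then show False
      using window realizes_on_subset assms(3) no_witness shift_pow_in_seqs assms(2) by blast
  next
    case False
    then have "{n..<n + length \<pi>} \<subseteq> {1..<length \<sigma>}" using fits by auto
    then show False
      using window realizes_on_subset assms(5) no_witness shift_pow_in_seqs assms(4) by blast
  qed
qed (use assms(1) in simp)

text \<open>The root pattern is \<open>[L-2, N-2, N-4, \<dots>, N-3, L-3, L-4, \<dots>, N-1, L-1]\<close>: after \<open>L-2\<close>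
  its entries \<open>1, \<dots>, N-1\<close> run down through \<open>N-2, N-4, \<dots>\<close> and then up through the remaining
  positions below \<open>N-1\<close>. \<open>root_rank N L\<close> is the inverse permutation; \<open>zigzag_rank\<close> inverts
  the zigzag block.\<close>
definition root_pos :: "nat \<Rightarrow> nat \<Rightarrow> nat \<Rightarrow> nat" where
  "root_pos N L k =
     (if k = 0 then L - 2
      else if k < N then (if 2 * k \<le> N then N - 2 * k else 2 * k - N - 1)
      else if k < L - 1 then L + N - 3 - k
      else L - 1)"

definition zigzag_rank :: "nat \<Rightarrow> nat \<Rightarrow> nat" where
  "zigzag_rank N p = (if even (N - p) then (N - p) div 2 else (N + p + 1) div 2)"

definition root_rank :: "nat \<Rightarrow> nat \<Rightarrow> nat \<Rightarrow> nat" where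
  "root_rank N L p =
     (if p \<le> N - 2 then zigzag_rank N p
      else if p \<le> L - 3 then L + N - 3 - p
      else if p = L - 2 then 0
      else L - 1)"

definition root_pattern :: "nat \<Rightarrow> nat \<Rightarrow> nat list" where
  "root_pattern N L = map (root_pos N L) [0..<L]"

lemma zigzag_rank_even_gap: "2 * k \<le> N \<Longrightarrow> zigzag_rank N (N - 2 * k) = k"
  unfolding zigzag_rank_def by simp

lemma zigzag_rank_odd_gap: "N < 2 * k \<Longrightarrow> k < N \<Longrightarrow> zigzag_rank N (2 * k - N - 1) = k"
  unfolding zigzag_rank_def by (simp add: even_iff_mod_2_eq_zero) presburger

lemma zigzag_rank_bounds_and_inverse:
  assumes "p \<le> N - 2" "N \<ge> 2"
  shows "1 \<le> zigzag_rank N p \<and> zigzag_rank N p < N \<and> root_pos N L (zigzag_rank N p) = p"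
proof (cases "even (N - p)")
  case True
  then obtain j where j: "N - p = 2 * j" by blast
  then have "zigzag_rank N p = j" unfolding zigzag_rank_def by simp
  then show ?thesis using j assms by (auto simp: root_pos_def)
next
  case False
  then obtain j where j: "N - p = 2 * j + 1" using oddE by blast
  then have "N + p + 1 = 2 * (p + j + 1)" using assms by (simp add: algebra_simps)
  then have "zigzag_rank N p = p + j + 1" unfolding zigzag_rank_def using False by simp
  then show ?thesis using j assms by (auto simp: root_pos_def)
qed

text \<open>The symbol at a position is its rank inside the window (\<open>0..L-2\<close>, resp. \<open>1..L-1\<close>),
  lowered by one for \<open>init_witness\<close> and capped at \<open>N-1\<close>. The positions \<open>N-1..L-3\<close> then all carry
  \<open>N-1\<close> and are told apart by the symbol \<open>0\<close> at \<open>L-2\<close>; the ranks \<open>0\<close> and \<open>1\<close> merged by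
  \<open>init_witness\<close> are told apart by its symbol \<open>0\<close> at \<open>L-1\<close>.\<close>
definition init_witness :: "nat \<Rightarrow> nat \<Rightarrow> nat \<Rightarrow> nat" where
  "init_witness N L p = (if p < L - 1 then min (N - 1) (root_rank N L p - 1) else 0)"

definition tail_witness :: "nat \<Rightarrow> nat \<Rightarrow> nat \<Rightarrow> nat" where
  "tail_witness N L p =
     (if p < L - 1
      then min (N - 1) (root_rank N L p - (if root_rank N L 0 < root_rank N L p then 1 else 0))
      else N - 1)"

context
  fixes N L :: nat
  assumes N_ge: "N \<ge> 2" and L_ge: "L \<ge> N + 2"
begin

lemma root_rank_zigzag: "p \<le> N - 2 \<Longrightarrow> root_rank N L p = zigzag_rank N p"
  unfolding root_rank_def by simp

lemma root_rank_run: "N - 1 \<le> p \<Longrightarrow> p \<le> L - 3 \<Longrightarrow> root_rank N L p = L + N - 3 - p"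
  using N_ge unfolding root_rank_def by auto

lemma root_rank_Lm2: "root_rank N L (L - 2) = 0"
  using N_ge L_ge unfolding root_rank_def by auto

lemma root_rank_Lm1: "root_rank N L (L - 1) = L - 1"
  using N_ge L_ge unfolding root_rank_def by auto

lemma root_pos_0: "root_pos N L 0 = L - 2"
  unfolding root_pos_def by simp

lemma root_pos_even_gap: "1 \<le> k \<Longrightarrow> 2 * k \<le> N \<Longrightarrow> root_pos N L k = N - 2 * k"
  unfolding root_pos_def by simp

lemma root_pos_odd_gap: "N < 2 * k \<Longrightarrow> k < N \<Longrightarrow> root_pos N L k = 2 * k - N - 1"
  unfolding root_pos_def by simp

lemma root_pos_run: "N \<le> k \<Longrightarrow> k < L - 1 \<Longrightarrow> root_pos N L k = L + N - 3 - k"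
  using N_ge unfolding root_pos_def by simp

lemma root_pos_Lm1: "root_pos N L (L - 1) = L - 1"
  using L_ge unfolding root_pos_def by simp

lemma root_rank_root_pos:
  assumes "k < L"
  shows "root_rank N L (root_pos N L k) = k"
proof -
  consider "k = 0" | "1 \<le> k" "2 * k \<le> N" | "N < 2 * k" "k < N" | "N \<le> k" "k < L - 1"
    | "k = L - 1"
    using assms by linarith
  then show ?thesis
  proof cases
    case 1
    then show ?thesis by (simp add: root_pos_0 root_rank_Lm2)
  next
    case 2
    then show ?thesis by (simp add: root_pos_even_gap root_rank_zigzag zigzag_rank_even_gap)
  next
    case 3
    then show ?thesis using zigzag_rank_odd_gap[of N k] by (simp add: root_pos_odd_gap root_rank_zigzag)
  next
    case 4
    then show ?thesis using N_ge by (simp add: root_pos_run root_rank_run)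
  next
    case 5
    then show ?thesis by (simp only: root_pos_Lm1 root_rank_Lm1)
  qed
qed

lemma root_pos_root_rank:
  assumes "p < L"
  shows "root_pos N L (root_rank N L p) = p"
proof -
  consider "p \<le> N - 2" | "N - 1 \<le> p" "p \<le> L - 3" | "p = L - 2" | "p = L - 1"
    using assms by linarith
  then show ?thesis
  proof cases
    case 1
    then show ?thesis using zigzag_rank_bounds_and_inverse[of p N L] N_ge by (simp add: root_rank_zigzag)
  next
    case 2
    then show ?thesis using N_ge L_ge by (simp add: root_rank_run root_pos_run)
  next
    case 3
    then show ?thesis by (simp add: root_rank_Lm2 root_pos_0)
  next
    case 4
    then show ?thesis by (simp only: root_rank_Lm1 root_pos_Lm1)
  qed
qed

lemma root_pos_less: "k < L \<Longrightarrow> root_pos N L k < L"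
  using N_ge L_ge unfolding root_pos_def by auto

lemma root_rank_less: "p < L \<Longrightarrow> root_rank N L p < L"
  using N_ge L_ge zigzag_rank_bounds_and_inverse[of p N L]
  unfolding root_rank_def by auto

lemma root_rank_0: "1 \<le> root_rank N L 0 \<and> root_rank N L 0 < N"
  using root_rank_zigzag[of 0] zigzag_rank_bounds_and_inverse[of 0 N L] N_ge by auto

lemma root_rank_inj: "p < L \<Longrightarrow> q < L \<Longrightarrow> root_rank N L p = root_rank N L q \<Longrightarrow> p = q"
  by (metis root_pos_root_rank)

lemma root_rank_ge_imp_run:
  assumes "p \<le> L - 2" "N \<le> root_rank N L p"
  shows "N - 1 \<le> p \<and> p \<le> L - 3"
  using assms N_ge root_rank_Lm2 zigzag_rank_bounds_and_inverse[of p N L]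
  unfolding root_rank_def by (auto split: if_splits)

lemma root_pattern_perm: "root_pattern N L \<in> perms L"
proof -
  have "bij_betw (root_pos N L) {0..<L} {0..<L}"
    by (rule bij_betw_byWitness[where f' = "root_rank N L"])
      (auto simp: root_pos_less root_rank_less root_rank_root_pos root_pos_root_rank)
  then show ?thesis
    unfolding perms_def root_pattern_def bij_betw_def by (simp add: distinct_map)
qed

lemma realizes_on_root_pattern_iff:
  "realizes_on \<omega> (root_pattern N L) W \<longleftrightarrow>
     (\<forall>p\<in>W. \<forall>q\<in>W. p < L \<longrightarrow> q < L \<longrightarrow> root_rank N L p < root_rank N L q \<longrightarrow>
        lex_less (shift_pow p \<omega>) (shift_pow q \<omega>))"
  unfolding realizes_on_def root_pattern_def
  by (auto simp: root_pos_less root_rank_less root_rank_root_pos)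
    (metis root_pos_root_rank root_rank_less)

lemma root_pos_less_Lm1: "k < L - 1 \<Longrightarrow> root_pos N L k < L - 1"
  using N_ge L_ge unfolding root_pos_def by auto

lemma root_rank_Suc_root_pos:
  assumes "k \<le> N"
  shows "root_rank N L (Suc (root_pos N L k)) =
    (if k = 0 then L - 1 else if k = 1 then L - 2 else if k = N then 0
     else if 2 * k \<le> N then N - k + 1 else N - k)"
proof -
  consider "k = 0" | "k = 1" | "k = N" "k \<ge> 2" | "2 \<le> k" "k < N" "2 * k \<le> N"
    | "2 \<le> k" "k < N" "N < 2 * k"
    using assms N_ge by linarith
  then show ?thesis
  proof cases
    case 1
    have "Suc (root_pos N L k) = L - 1" using 1 L_ge by (simp add: root_pos_0)
    then show ?thesis using 1 root_rank_Lm1 by simp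
  next
    case 2
    then show ?thesis using L_ge N_ge by (simp add: root_pos_even_gap root_rank_run)
  next
    case 3
    have "Suc (root_pos N L k) = L - 2" using 3 L_ge by (simp add: root_pos_run)
    then show ?thesis using 3 root_rank_Lm2 by simp
  next
    case 4
    have "Suc (root_pos N L k) = 2 * (N - k + 1) - N - 1" using 4 by (simp add: root_pos_even_gap)
    moreover have "root_rank N L (2 * (N - k + 1) - N - 1) = N - k + 1"
      using 4 zigzag_rank_odd_gap[of N "N - k + 1"] by (simp add: root_rank_zigzag)
    ultimately show ?thesis using 4 by simp
  next
    case 5
    have "Suc (root_pos N L k) = N - 2 * (N - k)" using 5 by (simp add: root_pos_odd_gap)
    moreover have "root_rank N L (N - 2 * (N - k)) = N - k"
      using 5 zigzag_rank_even_gap[of "N - k" N] by (simp add: root_rank_zigzag)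
    ultimately show ?thesis using 5 by simp
  qed
qed

lemma root_rank_Suc_root_pos_decreasing:
  "k < N \<Longrightarrow> root_rank N L (Suc (root_pos N L (Suc k))) < root_rank N L (Suc (root_pos N L k))"
  using root_rank_Suc_root_pos[of k] root_rank_Suc_root_pos[of "Suc k"] L_ge by auto

lemma root_pattern_forbidden: "forbidden N (root_pattern N L)"
proof -
  have "\<not> defines_pat \<omega> (root_pattern N L)" if "\<omega> \<in> seqs N" for \<omega>
  proof
    assume "defines_pat \<omega> (root_pattern N L)"
    then have ordered: "\<And>p q. p < L \<Longrightarrow> q < L \<Longrightarrow> root_rank N L p < root_rank N L q \<Longrightarrow>
        lex_less (shift_pow p \<omega>) (shift_pow q \<omega>)"
      using defines_pat_imp_realizes_on[of \<omega> _ UNIV] realizes_on_root_pattern_iff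
      by blast
    have "k \<le> \<omega> (root_pos N L k)" if "k \<le> N" for k
      using that
    proof (induction k)
      case (Suc k)
      define a b where "a = root_pos N L k" and "b = root_pos N L (Suc k)"
      have ranks: "root_rank N L a = k" "root_rank N L b = Suc k"
        using Suc.prems L_ge unfolding a_def b_def by (simp_all add: root_rank_root_pos)
      have succs: "Suc a < L" "Suc b < L"
        using root_pos_less_Lm1[of k] root_pos_less_Lm1[of "Suc k"] Suc.prems L_ge
        unfolding a_def b_def by linarith+
      have "lex_less (shift_pow a \<omega>) (shift_pow b \<omega>)"
        using ordered ranks succs by simp
      moreover have "lex_less (shift_pow (Suc b) \<omega>) (shift_pow (Suc a) \<omega>)"
        using ordered succs root_rank_Suc_root_pos_decreasing Suc.prems
        unfolding a_def b_def by simp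
      ultimately have "\<omega> a < \<omega> b" by (rule less_if_lex_less_shift_pow_Suc_swapped)
      then show ?case using Suc unfolding a_def b_def by simp
    qed simp
    then have "N \<le> \<omega> (root_pos N L N)" by simp
    with \<open>\<omega> \<in> seqs N\<close> show False unfolding seqs_def by (simp add: not_le[symmetric])
  qed
  then show ?thesis
    using root_pattern_perm unfolding forbidden_def root_pattern_def by simp
qed

lemma root_rank_run_decreasing:
  "N - 1 \<le> q \<Longrightarrow> q \<le> L - 3 \<Longrightarrow> N - 1 \<le> p \<Longrightarrow> p \<le> L - 3 \<Longrightarrow>
    root_rank N L p < root_rank N L q \<Longrightarrow> q < p"
  by (simp add: root_rank_run)

lemma init_witness_in_seqs: "init_witness N L \<in> seqs N"
  using N_ge unfolding seqs_def init_witness_def by auto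

lemma init_witness_run: "N - 1 \<le> x \<Longrightarrow> x \<le> L - 3 \<Longrightarrow> init_witness N L x = N - 1"
  using L_ge unfolding init_witness_def by (simp add: root_rank_run)

lemma init_witness_Lm2: "init_witness N L (L - 2) = 0"
  using L_ge unfolding init_witness_def by (simp add: root_rank_Lm2)

lemma init_witness_cases:
  assumes "p < L - 1" "q < L - 1" "root_rank N L p < root_rank N L q"
  shows "init_witness N L p < init_witness N L q \<or> N \<le> root_rank N L p \<or>
    root_rank N L p = 0 \<and> root_rank N L q = 1"
  using assms N_ge unfolding init_witness_def by (simp add: min_def; arith)

lemma init_witness_realizes: "realizes_on (init_witness N L) (root_pattern N L) {0..<L - 1}"
  unfolding realizes_on_root_pattern_iff
proof (intro ballI impI)
  fix p q assume "p \<in> {0..<L - 1}" "q \<in> {0..<L - 1}" and ranks: "root_rank N L p < root_rank N L q"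
  then have p: "p < L - 1" and q: "q < L - 1" by auto
  let ?w = "init_witness N L"
  consider "?w p < ?w q" | "N \<le> root_rank N L p" | "root_rank N L p = 0" "root_rank N L q = 1"
    using init_witness_cases[OF p q ranks] by auto
  then show "lex_less (shift_pow p ?w) (shift_pow q ?w)"
  proof cases
    case 1
    then show ?thesis by (rule lex_less_shift_pow_if_less)
  next
    case 2
    then have "N - 1 \<le> p" "p \<le> L - 3" "N - 1 \<le> q" "q \<le> L - 3"
      using root_rank_ge_imp_run[of p] root_rank_ge_imp_run[of q] p q ranks by auto
    moreover from this have "q < p" using root_rank_run_decreasing ranks by blast
    ultimately show ?thesis
      using init_witness_run init_witness_Lm2 N_ge
      by (intro lex_less_shift_pow_plateau[where a = "N - 1" and c = "L - 2" and v = "N - 1"]) auto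
  next
    case 3
    then have "p = L - 2" "q = N - 2"
      using root_pos_root_rank[of p] root_pos_root_rank[of q] p q N_ge
      by (auto simp: root_pos_0 root_pos_even_gap)
    show ?thesis
    proof (rule lex_less_shift_powI[of 1])
      show "\<forall>m<1. ?w (p + m) = ?w (q + m)"
        using 3 p q by (simp add: init_witness_def)
      have "p + 1 = L - 1" "q + 1 = N - 1" using \<open>p = L - 2\<close> \<open>q = N - 2\<close> N_ge L_ge by auto
      then show "?w (p + 1) < ?w (q + 1)"
        using init_witness_run[of "N - 1"] N_ge L_ge by (simp add: init_witness_def)
    qed
  qed
qed

lemma tail_witness_in_seqs: "tail_witness N L \<in> seqs N"
  using N_ge unfolding seqs_def tail_witness_def by auto

lemma tail_witness_run: "N - 1 \<le> x \<Longrightarrow> x \<le> L - 3 \<Longrightarrow> tail_witness N L x = N - 1"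
  using L_ge root_rank_0 unfolding tail_witness_def by (simp add: root_rank_run)

lemma tail_witness_beyond: "L - 1 \<le> x \<Longrightarrow> tail_witness N L x = N - 1"
  unfolding tail_witness_def by simp

lemma tail_witness_Lm2: "tail_witness N L (L - 2) = 0"
  using L_ge unfolding tail_witness_def by (simp add: root_rank_Lm2)

lemma tail_witness_cases:
  assumes "1 \<le> p" "p < L" "1 \<le> q" "q < L" "root_rank N L p < root_rank N L q"
  shows "tail_witness N L p < tail_witness N L q \<or> N \<le> root_rank N L p"
proof -
  have "p \<noteq> L - 1" using assms root_rank_less[of q] root_rank_Lm1 by auto
  moreover have "root_rank N L p \<noteq> root_rank N L 0" "root_rank N L q \<noteq> root_rank N L 0"
    using assms root_rank_inj[of _ 0] L_ge by auto
  ultimately show ?thesis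
    using assms root_rank_0 unfolding tail_witness_def by (auto simp: min_def)
qed

lemma tail_witness_realizes: "realizes_on (tail_witness N L) (root_pattern N L) {1..<L}"
  unfolding realizes_on_root_pattern_iff
proof (intro ballI impI)
  fix p q assume "p \<in> {1..<L}" "q \<in> {1..<L}" and ranks: "root_rank N L p < root_rank N L q"
  then have p: "1 \<le> p" "p < L" and q: "1 \<le> q" "q < L" by auto
  let ?w = "tail_witness N L"
  show "lex_less (shift_pow p ?w) (shift_pow q ?w)"
  proof (cases "?w p < ?w q")
    case True
    then show ?thesis by (rule lex_less_shift_pow_if_less)
  next
    case False
    then have "N \<le> root_rank N L p" using tail_witness_cases[OF p q ranks] by blast
    moreover have "p \<le> L - 2"
      using ranks root_rank_less[OF q(2)] root_rank_Lm1 p by (cases "p = L - 1") auto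
    ultimately have p_run: "N - 1 \<le> p" "p \<le> L - 3" using root_rank_ge_imp_run by auto
    show ?thesis
    proof (cases "q = L - 1")
      case True
      show ?thesis
      proof (rule lex_less_shift_powI[of "L - 2 - p"])
        show "\<forall>m<L - 2 - p. ?w (p + m) = ?w (q + m)"
          using True p_run by (simp add: tail_witness_run tail_witness_beyond)
        show "?w (p + (L - 2 - p)) < ?w (q + (L - 2 - p))"
          using True p_run N_ge tail_witness_Lm2 by (simp add: tail_witness_beyond)
      qed
    next
      case False
      then have "N - 1 \<le> q" "q \<le> L - 3"
        using root_rank_ge_imp_run[of q] \<open>N \<le> root_rank N L p\<close> ranks q by auto
      then have "q < p" using root_rank_run_decreasing p_run ranks by blast
      then show ?thesis
        using p_run \<open>N - 1 \<le> q\<close> tail_witness_run tail_witness_Lm2 N_ge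
        by (intro lex_less_shift_pow_plateau[where a = "N - 1" and c = "L - 2" and v = "N - 1"]) auto
    qed
  qed
qed

end

theorem proposition5:
  fixes N L :: nat
  assumes "N \<ge> 2" and "L \<ge> N + 2"
  shows "\<exists>\<pi>. length \<pi> = L \<and> forbidden_root N \<pi>"
proof -
  have length: "length (root_pattern N L) = L" by (simp add: root_pattern_def)
  have "forbidden_root N (root_pattern N L)"
  proof (rule forbidden_root_if_maximal_windows_realized)
    show "forbidden N (root_pattern N L)" using assms by (rule root_pattern_forbidden)
    show "realizes_on (init_witness N L) (root_pattern N L) {0..<length (root_pattern N L) - 1}"
      using init_witness_realizes[OF assms] by (simp only: length)
    show "realizes_on (tail_witness N L) (root_pattern N L) {1..<length (root_pattern N L)}"
      using tail_witness_realizes[OF assms] by (simp only: length)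
  qed (use assms in \<open>rule init_witness_in_seqs tail_witness_in_seqs\<close>)+
  with length show ?thesis by blast
qed

end
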